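(* Let $G(x,y;\xi)$, $g(x,y)=\mathbb{E}_{\xi\sim\mathcal{P}}G(x,y;\xi)$ be such that there is $\bar l>0$ with, for every $\xi$ and all $x_1,x_2,y_1,y_2$, $\|\nabla_xG(x_1,y_1;\xi)-\nabla_xG(x_2,y_2;\xi)\|\leq\bar l[\|x_1-x_2\|+\|y_1-y_2\|]$ and $\|\nabla_yG(x_1,y_1;\xi)-\nabla_yG(x_2,y_2;\xi)\|\leq\bar l[\|x_1-x_2\|+\|y_1-y_2\|]$. Let $(x_t,y_t,m_t,n_t)$ be generated by the ZO-VRAGDA algorithm described in the context with step sizes $\alpha,\beta>0$. Then for every $t\geq0$, $$\begin{aligned}\mathbb{E}g(x_{t+1},y_{t+1})\geq{}&\mathbb{E}g(x_t,y_t)+\frac\beta2\mathbb{E}\|\nabla_yg(x_{t+1},y_t)\|^2-\frac\alpha2\mathbb{E}\|\nabla_xg(x_t,y_t)\|^2-\frac\beta2\mathbb{E}\|\nabla_yg(x_{t+1},y_t)-n_t\|^2\\&+\frac\alpha2\mathbb{E}\|\nabla_xg(x_t,y_t)-m_t\|^2+\frac\beta2(1-\bar l\beta)\mathbb{E}\|n_t\|^2-\frac\alpha2(1+\alpha\bar l)\mathbb{E}\|m_t\|^2.\end{aligned}$$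
   Context: Zeroth-order estimators: for a sample $\xi$ and a direction $u$ uniform on the unit sphere of $\mathbb{R}^{d_1}$, $\hat\nabla_xG(x,y;\xi)=\frac{G(x+\mu_1u,y;\xi)-G(x,y;\xi)}{\mu_1/d_1}u$; for $\zeta$ and $v$ uniform on the unit sphere of $\mathbb{R}^{d_2}$, $\hat\nabla_yG(x,y;\zeta)=\frac{G(x,y+\mu_2v;\zeta)-G(x,y;\zeta)}{\mu_2/d_2}v$; for a sample set $\mathcal{B}$ of size $r$ (each sample with its own independent direction) $\hat\nabla G(x,y;\mathcal{B})$ is the average of the single-sample estimators. ZO-VRAGDA with parameters $q,B,b\in\mathbb{N}$, $\alpha,\beta,\mu_1,\mu_2>0$, initial $(x_0,y_0)$: for $t=0,1,\dots$: if $t\bmod q=0$, draw $B$ fresh i.i.d. samples $\mathcal{B}_t$ from $\mathcal{P}$ and set $m_t=\hat\nabla_xG(x_t,y_t;\mathcal{B}_t)$; otherwise draw $b$ fresh samples $\mathcal{I}_t$ and set $m_t=\hat\nabla_xG(x_t,y_t;\mathcal{I}_t)-\hat\nabla_xG(x_{t-1},y_{t-1};\mathcal{I}_t)+m_{t-1}$ (same samples and directions in both terms). Set $x_{t+1}=x_t-\alpha m_t$. Then if $t\bmod q=0$, draw $B$ fresh samples $\bar{\mathcal{B}}_t$ and set $n_t=\hat\nabla_yG(x_{t+1},y_t;\bar{\mathcal{B}}_t)$; otherwise draw $b$ fresh samples $\bar{\mathcal{I}}_t$ and set $n_t=\hat\nabla_yG(x_{t+1},y_t;\bar{\mathcal{I}}_t)-\hat\nabla_yG(x_t,y_{t-1};\bar{\mathcal{I}}_t)+n_{t-1}$.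 Set $y_{t+1}=y_t+\beta n_t$. Expectations are over all randomness of the algorithm. *)

theory Defs
  imports "HOL-Probability.Probability"
begin

definition grad :: "('a::euclidean_space \<Rightarrow> real) \<Rightarrow> 'a \<Rightarrow> 'a" where
  "grad f x = (\<Sum>b\<in>Basis. frechet_derivative f (at x) b *\<^sub>R b)"

definition unif_sphere :: "'a::euclidean_space measure" where
  "unif_sphere = distr (uniform_measure lborel (ball 0 1)) borel (\<lambda>x. x /\<^sub>R norm x)"

definition obj :: "('a \<Rightarrow> 'b \<Rightarrow> 's \<Rightarrow> real) \<Rightarrow> 's measure \<Rightarrow> 'a \<Rightarrow> 'b \<Rightarrow> real" where
  "obj G P x y = (\<integral>\<xi>. G x y \<xi> \<partial>P)"

definition zo_x :: "('a::euclidean_space \<Rightarrow> 'b \<Rightarrow> 's \<Rightarrow> real) \<Rightarrow> real \<Rightarrow> 'a \<Rightarrow> 'b \<Rightarrow> 's \<times> 'a \<Rightarrow> 'a" where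
  "zo_x G \<mu> x y s = ((G (x + \<mu> *\<^sub>R snd s) y (fst s) - G x y (fst s)) / (\<mu> / real DIM('a))) *\<^sub>R snd s"

definition zo_y :: "('a \<Rightarrow> 'b::euclidean_space \<Rightarrow> 's \<Rightarrow> real) \<Rightarrow> real \<Rightarrow> 'a \<Rightarrow> 'b \<Rightarrow> 's \<times> 'b \<Rightarrow> 'b" where
  "zo_y G \<mu> x y s = ((G x (y + \<mu> *\<^sub>R snd s) (fst s) - G x y (fst s)) / (\<mu> / real DIM('b))) *\<^sub>R snd s"

definition zo_x_batch :: "('a::euclidean_space \<Rightarrow> 'b \<Rightarrow> 's \<Rightarrow> real) \<Rightarrow> real \<Rightarrow> nat \<Rightarrow> 'a \<Rightarrow> 'b \<Rightarrow> (nat \<Rightarrow> 's \<times> 'a) \<Rightarrow> 'a" where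
  "zo_x_batch G \<mu> r x y S = (1 / real r) *\<^sub>R (\<Sum>i<r. zo_x G \<mu> x y (S i))"

definition zo_y_batch :: "('a \<Rightarrow> 'b::euclidean_space \<Rightarrow> 's \<Rightarrow> real) \<Rightarrow> real \<Rightarrow> nat \<Rightarrow> 'a \<Rightarrow> 'b \<Rightarrow> (nat \<Rightarrow> 's \<times> 'b) \<Rightarrow> 'b" where
  "zo_y_batch G \<mu> r x y S = (1 / real r) *\<^sub>R (\<Sum>i<r. zo_y G \<mu> x y (S i))"

text \<open>W t i = ((xi, u), (zeta, v)) is the
  i-th fresh draw at iteration t for the x-update (xi, u) and for the y-update (zeta, v); only
  i < B (resp. i < b) are used.  The state at time t is (x_t, y_t, x_{t-1}, y_{t-1}, m_{t-1}, n_{t-1})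
  (the "previous" components at t = 0 are dummies and never used).\<close>
primrec vr_state :: "('a::euclidean_space \<Rightarrow> 'b::euclidean_space \<Rightarrow> 's \<Rightarrow> real) \<Rightarrow> nat \<Rightarrow> nat \<Rightarrow> nat \<Rightarrow>
    real \<Rightarrow> real \<Rightarrow> real \<Rightarrow> real \<Rightarrow> 'a \<Rightarrow> 'b \<Rightarrow> (nat \<Rightarrow> nat \<Rightarrow> ('s \<times> 'a) \<times> ('s \<times> 'b)) \<Rightarrow> nat \<Rightarrow>
    'a \<times> 'b \<times> 'a \<times> 'b \<times> 'a \<times> 'b" where
  "vr_state G q B b \<alpha> \<beta> \<mu>1 \<mu>2 x0 y0 W 0 = (x0, y0, x0, y0, 0, 0)"
| "vr_state G q B b \<alpha> \<beta> \<mu>1 \<mu>2 x0 y0 W (Suc t) =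
    (case vr_state G q B b \<alpha> \<beta> \<mu>1 \<mu>2 x0 y0 W t of (x, y, xp, yp, mp, np) \<Rightarrow>
      (let Sx = (\<lambda>i. fst (W t i)); Sy = (\<lambda>i. snd (W t i));
           m = (if t mod q = 0 then zo_x_batch G \<mu>1 B x y Sx
                else zo_x_batch G \<mu>1 b x y Sx - zo_x_batch G \<mu>1 b xp yp Sx + mp);
           x' = x - \<alpha> *\<^sub>R m;
           n = (if t mod q = 0 then zo_y_batch G \<mu>2 B x' y Sy
                else zo_y_batch G \<mu>2 b x' y Sy - zo_y_batch G \<mu>2 b x yp Sy + np);
           y' = y + \<beta> *\<^sub>R n
       in (x', y', x, y, m, n)))"

definition vr_x where "vr_x G q B b \<alpha> \<beta> \<mu>1 \<mu>2 x0 y0 W t = fst (vr_state G q B b \<alpha> \<beta> \<mu>1 \<mu>2 x0 y0 W t)"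
definition vr_y where "vr_y G q B b \<alpha> \<beta> \<mu>1 \<mu>2 x0 y0 W t = fst (snd (vr_state G q B b \<alpha> \<beta> \<mu>1 \<mu>2 x0 y0 W t))"
definition vr_m where "vr_m G q B b \<alpha> \<beta> \<mu>1 \<mu>2 x0 y0 W t =
  fst (snd (snd (snd (snd (vr_state G q B b \<alpha> \<beta> \<mu>1 \<mu>2 x0 y0 W (Suc t))))))"
definition vr_n where "vr_n G q B b \<alpha> \<beta> \<mu>1 \<mu>2 x0 y0 W t =
  snd (snd (snd (snd (snd (vr_state G q B b \<alpha> \<beta> \<mu>1 \<mu>2 x0 y0 W (Suc t))))))"

end

theory Submission
  imports Defs
begin

(* The per-sample Lipschitz bounds make g smooth in each block: the gradient of the expectation
   is the expectation of the gradients, so g inherits the descent-lemma bound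
   |g(x + h, y) - g(x, y) - grad_x g(x, y) . h| <= lbar/2 |h|^2, and likewise in y.  Applying it
   to the x-step x_{t+1} = x_t - alpha m_t and then to the y-step y_{t+1} = y_t + beta n_t, and
   expanding the inner products by 2 a . b = |a|^2 + |b|^2 - |a - b|^2, gives the inequality for
   every realisation of the samples; integrating it gives the claim. *)

lemma grad_inner_eq_derivative:
  fixes f :: "'a::euclidean_space \<Rightarrow> real"
  assumes "(f has_derivative f') (at x)"
  shows "grad f x \<bullet> h = f' h"
proof -
  have fd: "frechet_derivative f (at x) = f'" using frechet_derivative_at[OF assms] by simp
  have lin: "linear f'" using assms has_derivative_linear by blast
  have "grad f x \<bullet> h = (\<Sum>b\<in>Basis. f' b * (b \<bullet> h))"
    unfolding grad_def fd by (simp add: inner_sum_left)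
  also have "\<dots> = f' (\<Sum>b\<in>Basis. (h \<bullet> b) *\<^sub>R b)"
    using lin by (simp add: real_vector.linear_sum linear_scale inner_commute mult.commute)
  also have "\<dots> = f' h" by (simp add: euclidean_representation)
  finally show ?thesis .
qed

lemma has_real_derivative_along_line:
  fixes f :: "'a::euclidean_space \<Rightarrow> real"
  assumes "f differentiable (at (x + s *\<^sub>R h))"
  shows "((\<lambda>s. f (x + s *\<^sub>R h)) has_real_derivative grad f (x + s *\<^sub>R h) \<bullet> h) (at s)"
proof -
  let ?D = "frechet_derivative f (at (x + s *\<^sub>R h))"
  have fd: "(f has_derivative ?D) (at (x + s *\<^sub>R h))"
    using assms frechet_derivative_works by blast
  have line: "((\<lambda>s. x + s *\<^sub>R h) has_derivative (\<lambda>s. s *\<^sub>R h)) (at s)"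
    by (auto intro!: derivative_eq_intros)
  have "(\<lambda>u. ?D (u *\<^sub>R h)) = (*) (grad f (x + s *\<^sub>R h) \<bullet> h)"
    using has_derivative_linear[OF fd] grad_inner_eq_derivative[OF fd] by (auto simp: linear_scale)
  then show ?thesis
    using has_derivative_compose[OF line fd] by (simp add: has_field_derivative_def o_def)
qed

lemma abs_diff_le_of_derivative_bound:
  fixes \<phi> \<phi>' :: "real \<Rightarrow> real"
  assumes deriv: "\<And>s. 0 \<le> s \<Longrightarrow> s \<le> 1 \<Longrightarrow> (\<phi> has_real_derivative \<phi>' s) (at s)"
    and bound: "\<And>s. 0 \<le> s \<Longrightarrow> s \<le> 1 \<Longrightarrow> \<bar>\<phi>' s\<bar> \<le> K * s"
  shows "\<bar>\<phi> 1 - \<phi> 0\<bar> \<le> K / 2"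
proof -
  have up: "(\<lambda>s. \<phi> s + K / 2 * s\<^sup>2) 0 \<le> (\<lambda>s. \<phi> s + K / 2 * s\<^sup>2) 1"
  proof (rule DERIV_nonneg_imp_nondecreasing[of 0 1])
    fix s :: real assume s: "0 \<le> s" "s \<le> 1"
    show "\<exists>y. ((\<lambda>s. \<phi> s + K / 2 * s\<^sup>2) has_real_derivative y) (at s) \<and> 0 \<le> y"
    proof (intro exI conjI)
      show "((\<lambda>s. \<phi> s + K / 2 * s\<^sup>2) has_real_derivative \<phi>' s + K * s) (at s)"
        by (auto intro!: derivative_eq_intros deriv[OF s])
    qed (use bound[OF s] in simp)
  qed simp
  have down: "(\<lambda>s. K / 2 * s\<^sup>2 - \<phi> s) 0 \<le> (\<lambda>s. K / 2 * s\<^sup>2 - \<phi> s) 1"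
  proof (rule DERIV_nonneg_imp_nondecreasing[of 0 1])
    fix s :: real assume s: "0 \<le> s" "s \<le> 1"
    show "\<exists>y. ((\<lambda>s. K / 2 * s\<^sup>2 - \<phi> s) has_real_derivative y) (at s) \<and> 0 \<le> y"
    proof (intro exI conjI)
      show "((\<lambda>s. K / 2 * s\<^sup>2 - \<phi> s) has_real_derivative K * s - \<phi>' s) (at s)"
        by (auto intro!: derivative_eq_intros deriv[OF s])
    qed (use bound[OF s] in simp)
  qed simp
  show ?thesis unfolding abs_le_iff using up down by simp
qed

lemma lipschitz_grad_quadratic_bound:
  fixes f :: "'a::euclidean_space \<Rightarrow> real"
  assumes diff: "\<And>z. f differentiable (at z)"
    and lip: "\<And>x1 x2. norm (grad f x1 - grad f x2) \<le> L * norm (x1 - x2)"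
  shows "\<bar>f (x + h) - f x - grad f x \<bullet> h\<bar> \<le> L / 2 * (norm h)\<^sup>2"
proof -
  let ?\<phi> = "\<lambda>s. f (x + s *\<^sub>R h) - s * (grad f x \<bullet> h)"
  have "\<bar>?\<phi> 1 - ?\<phi> 0\<bar> \<le> L * (norm h)\<^sup>2 / 2"
  proof (rule abs_diff_le_of_derivative_bound)
    fix s :: real
    show "(?\<phi> has_real_derivative (grad f (x + s *\<^sub>R h) - grad f x) \<bullet> h) (at s)"
      by (auto intro!: derivative_eq_intros has_real_derivative_along_line diff
          simp: inner_diff_left)
    assume "0 \<le> s"
    have "\<bar>(grad f (x + s *\<^sub>R h) - grad f x) \<bullet> h\<bar> \<le> norm (grad f (x + s *\<^sub>R h) - grad f x) * norm h"
      by (rule Cauchy_Schwarz_ineq2)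
    also have "\<dots> \<le> L * norm (s *\<^sub>R h) * norm h"
      using lip[of "x + s *\<^sub>R h" x] by (simp add: mult_right_mono)
    also have "\<dots> = L * (norm h)\<^sup>2 * s" using \<open>0 \<le> s\<close> by (simp add: power2_eq_square)
    finally show "\<bar>(grad f (x + s *\<^sub>R h) - grad f x) \<bullet> h\<bar> \<le> L * (norm h)\<^sup>2 * s" .
  qed
  then show ?thesis by (simp add: algebra_simps)
qed

lemma grad_eq_of_quadratic_bound:
  fixes f :: "'a::euclidean_space \<Rightarrow> real"
  assumes bound: "\<And>h. \<bar>f (x + h) - f x - v \<bullet> h\<bar> \<le> C * (norm h)\<^sup>2"
  shows "grad f x = v"
proof -
  have "(f has_derivative (\<lambda>h. v \<bullet> h)) (at x)"
    unfolding has_derivative_at_alt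
  proof (intro conjI allI impI bounded_linear_inner_right)
    fix e :: real assume e: "e > 0"
    show "\<exists>d>0. \<forall>y. norm (y - x) < d \<longrightarrow> norm (f y - f x - v \<bullet> (y - x)) \<le> e * norm (y - x)"
    proof (intro exI[of _ "e / (\<bar>C\<bar> + 1)"] conjI allI impI)
      show "0 < e / (\<bar>C\<bar> + 1)" using e by simp
      fix y assume y: "norm (y - x) < e / (\<bar>C\<bar> + 1)"
      have "norm (f y - f x - v \<bullet> (y - x)) \<le> C * (norm (y - x))\<^sup>2"
        using bound[of "y - x"] by simp
      also have "\<dots> \<le> (\<bar>C\<bar> * norm (y - x)) * norm (y - x)"
        by (simp add: power2_eq_square mult.assoc mult_right_mono)
      also have "\<dots> \<le> e * norm (y - x)"
      proof (rule mult_right_mono)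
        have "\<bar>C\<bar> * norm (y - x) \<le> (\<bar>C\<bar> + 1) * norm (y - x)"
          by (simp add: algebra_simps)
        also have "\<dots> \<le> e"
          using y by (simp add: field_simps)
        finally show "\<bar>C\<bar> * norm (y - x) \<le> e" .
      qed simp
      finally show "norm (f y - f x - v \<bullet> (y - x)) \<le> e * norm (y - x)" .
    qed
  qed
  from grad_inner_eq_derivative[OF this] show ?thesis
    by (rule euclidean_eqI)
qed

lemma borel_measurable_grad_inner:
  fixes F :: "'a::euclidean_space \<Rightarrow> 's \<Rightarrow> real"
  assumes meas: "\<And>z. F z \<in> borel_measurable M"
    and diff: "\<And>\<xi>. \<xi> \<in> space M \<Longrightarrow> (\<lambda>z. F z \<xi>) differentiable (at x)"
  shows "(\<lambda>\<xi>. grad (\<lambda>z. F z \<xi>) x \<bullet> h) \<in> borel_measurable M"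
proof (rule borel_measurable_LIMSEQ_real[where
      u = "\<lambda>k \<xi>. (F (x + inverse (real (Suc k)) *\<^sub>R h) \<xi> - F x \<xi>) / inverse (real (Suc k))"])
  fix \<xi> assume \<xi>: "\<xi> \<in> space M"
  have "((\<lambda>s. F (x + s *\<^sub>R h) \<xi>) has_real_derivative grad (\<lambda>z. F z \<xi>) x \<bullet> h) (at 0)"
    using has_real_derivative_along_line[of "\<lambda>z. F z \<xi>" x 0 h] diff[OF \<xi>] by simp
  then have "((\<lambda>s. (F (x + s *\<^sub>R h) \<xi> - F x \<xi>) / s) \<longlongrightarrow> grad (\<lambda>z. F z \<xi>) x \<bullet> h) (at 0)"
    by (simp add: DERIV_def)
  moreover have "filterlim (\<lambda>k. inverse (real (Suc k))) (at 0) sequentially"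
    using LIMSEQ_inverse_real_of_nat unfolding filterlim_at by simp
  ultimately show "(\<lambda>k. (F (x + inverse (real (Suc k)) *\<^sub>R h) \<xi> - F x \<xi>) / inverse (real (Suc k)))
      \<longlonglongrightarrow> grad (\<lambda>z. F z \<xi>) x \<bullet> h"
    by (rule filterlim_compose)
qed (use meas in measurable)

lemma integrable_grad:
  fixes F :: "'a::euclidean_space \<Rightarrow> 's \<Rightarrow> real"
  assumes "finite_measure M" and int: "\<And>z. integrable M (F z)"
    and diff: "\<And>\<xi>. \<xi> \<in> space M \<Longrightarrow> (\<lambda>z. F z \<xi>) differentiable (at x)"
    and bound: "\<And>\<xi> h. \<xi> \<in> space M \<Longrightarrow>
      \<bar>F (x + h) \<xi> - F x \<xi> - grad (\<lambda>z. F z \<xi>) x \<bullet> h\<bar> \<le> C * (norm h)\<^sup>2"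
  shows "integrable M (\<lambda>\<xi>. grad (\<lambda>z. F z \<xi>) x)"
proof -
  interpret finite_measure M by fact
  have "integrable M (\<lambda>\<xi>. grad (\<lambda>z. F z \<xi>) x \<bullet> b)" for b
  proof (rule Bochner_Integration.integrable_bound)
    show "integrable M (\<lambda>\<xi>. \<bar>F (x + b) \<xi> - F x \<xi>\<bar> + C * (norm b)\<^sup>2)"
      using int by auto
    show "(\<lambda>\<xi>. grad (\<lambda>z. F z \<xi>) x \<bullet> b) \<in> borel_measurable M"
      using int diff by (intro borel_measurable_grad_inner) auto
    show "AE \<xi> in M. norm (grad (\<lambda>z. F z \<xi>) x \<bullet> b) \<le> norm (\<bar>F (x + b) \<xi> - F x \<xi>\<bar> + C * (norm b)\<^sup>2)"
      using bound[of _ b] by (intro AE_I2) fastforce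
  qed
  then have "integrable M (\<lambda>\<xi>. \<Sum>b\<in>Basis. (grad (\<lambda>z. F z \<xi>) x \<bullet> b) *\<^sub>R b)"
    by auto
  then show ?thesis by (simp add: euclidean_representation)
qed

lemma expectation_quadratic_bound:
  fixes F :: "'a::euclidean_space \<Rightarrow> 's \<Rightarrow> real"
  assumes "prob_space P" and int: "\<And>z. integrable P (F z)"
    and diff: "\<And>\<xi> z. \<xi> \<in> space P \<Longrightarrow> (\<lambda>z. F z \<xi>) differentiable (at z)"
    and lip: "\<And>\<xi> x1 x2. \<xi> \<in> space P \<Longrightarrow>
      norm (grad (\<lambda>z. F z \<xi>) x1 - grad (\<lambda>z. F z \<xi>) x2) \<le> L * norm (x1 - x2)"
  shows "\<bar>(\<integral>\<xi>. F (x + h) \<xi> \<partial>P) - (\<integral>\<xi>. F x \<xi> \<partial>P) - grad (\<lambda>z. \<integral>\<xi>. F z \<xi> \<partial>P) x \<bullet> h\<bar>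
    \<le> L / 2 * (norm h)\<^sup>2"
proof -
  interpret prob_space P by fact
  have pointwise: "\<bar>F (x + h) \<xi> - F x \<xi> - grad (\<lambda>z. F z \<xi>) x \<bullet> h\<bar> \<le> L / 2 * (norm h)\<^sup>2"
    if "\<xi> \<in> space P" for \<xi> h
    using lipschitz_grad_quadratic_bound[of "\<lambda>z. F z \<xi>"] diff lip that by blast
  have int_grad: "integrable P (\<lambda>\<xi>. grad (\<lambda>z. F z \<xi>) x)"
    using finite_measure_axioms int diff pointwise by (rule integrable_grad)
  define v where "v = (\<integral>\<xi>. grad (\<lambda>z. F z \<xi>) x \<partial>P)"
  have bound: "\<bar>(\<integral>\<xi>. F (x + h) \<xi> \<partial>P) - (\<integral>\<xi>. F x \<xi> \<partial>P) - v \<bullet> h\<bar> \<le> L / 2 * (norm h)\<^sup>2" for h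
proof -
    have "(\<integral>\<xi>. F (x + h) \<xi> \<partial>P) - (\<integral>\<xi>. F x \<xi> \<partial>P) - v \<bullet> h
        = (\<integral>\<xi>. F (x + h) \<xi> - F x \<xi> - grad (\<lambda>z. F z \<xi>) x \<bullet> h \<partial>P)"
      using int int_grad by (simp add: v_def)
    also have "\<bar>\<dots>\<bar> \<le> (\<integral>\<xi>. \<bar>F (x + h) \<xi> - F x \<xi> - grad (\<lambda>z. F z \<xi>) x \<bullet> h\<bar> \<partial>P)"
      by (rule integral_abs_bound)
    also have "\<dots> \<le> (\<integral>\<xi>. L / 2 * (norm h)\<^sup>2 \<partial>P)"
      using int int_grad pointwise by (intro integral_mono) auto
    also have "\<dots> = L / 2 * (norm h)\<^sup>2" by (simp add: prob_space)
    finally show ?thesis .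
  qed
  have grad_expectation: "grad (\<lambda>z. \<integral>\<xi>. F z \<xi> \<partial>P) x = v"
    using bound by (rule grad_eq_of_quadratic_bound)
  from bound show ?thesis unfolding grad_expectation .
qed

lemma quadratic_bound_step_ge:
  fixes f :: "'a::real_inner \<Rightarrow> real"
  assumes "\<bar>f (x + s *\<^sub>R d) - f x - v \<bullet> (s *\<^sub>R d)\<bar> \<le> L / 2 * (norm (s *\<^sub>R d))\<^sup>2"
  shows "f x + s / 2 * ((norm v)\<^sup>2 + (norm d)\<^sup>2 - (norm (v - d))\<^sup>2) - L / 2 * s\<^sup>2 * (norm d)\<^sup>2
    \<le> f (x + s *\<^sub>R d)"
proof -
  have polarization: "(norm v)\<^sup>2 + (norm d)\<^sup>2 - (norm (v - d))\<^sup>2 = 2 * (v \<bullet> d)"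
    by (simp add: power2_norm_eq_inner inner_diff_left inner_diff_right inner_commute)
  have polar: "v \<bullet> (s *\<^sub>R d) = s / 2 * ((norm v)\<^sup>2 + (norm d)\<^sup>2 - (norm (v - d))\<^sup>2)"
    unfolding polarization by simp
  have norm_sq: "(norm (s *\<^sub>R d))\<^sup>2 = s\<^sup>2 * (norm d)\<^sup>2"
    by (simp add: power_mult_distrib)
  show ?thesis
    using assms unfolding polar norm_sq abs_le_iff mult.assoc by linarith
qed

lemma gda_step_lower_bound:
  fixes g :: "'a::real_inner \<Rightarrow> 'b::real_inner \<Rightarrow> real"
  assumes g_x: "\<And>x y h. \<bar>g (x + h) y - g x y - gx x y \<bullet> h\<bar> \<le> L / 2 * (norm h)\<^sup>2"
    and g_y: "\<And>x y h. \<bar>g x (y + h) - g x y - gy x y \<bullet> h\<bar> \<le> L / 2 * (norm h)\<^sup>2"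
    and x': "x' = x - \<alpha> *\<^sub>R m" and y': "y' = y + \<beta> *\<^sub>R n"
  shows "g x y
      + \<beta> / 2 * (norm (gy x' y))\<^sup>2
      - \<alpha> / 2 * (norm (gx x y))\<^sup>2
      - \<beta> / 2 * (norm (gy x' y - n))\<^sup>2
      + \<alpha> / 2 * (norm (gx x y - m))\<^sup>2
      + \<beta> / 2 * (1 - L * \<beta>) * (norm n)\<^sup>2
      - \<alpha> / 2 * (1 + \<alpha> * L) * (norm m)\<^sup>2 \<le> g x' y'"
proof -
  have x_step: "g x y - \<alpha> / 2 * ((norm (gx x y))\<^sup>2 + (norm m)\<^sup>2 - (norm (gx x y - m))\<^sup>2)
      - L / 2 * \<alpha>\<^sup>2 * (norm m)\<^sup>2 \<le> g x' y"
    using quadratic_bound_step_ge[where f = "\<lambda>x. g x y", OF g_x, of x "- \<alpha>" m] x' by simp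
  have y_step: "g x' y + \<beta> / 2 * ((norm (gy x' y))\<^sup>2 + (norm n)\<^sup>2 - (norm (gy x' y - n))\<^sup>2)
      - L / 2 * \<beta>\<^sup>2 * (norm n)\<^sup>2 \<le> g x' y'"
    using quadratic_bound_step_ge[where f = "g x'", OF g_y, of y \<beta> n] y' by simp
  from x_step y_step show ?thesis
    by (simp add: field_simps power2_eq_square)
qed

lemma vr_x_Suc:
  "vr_x G q B b \<alpha> \<beta> \<mu>1 \<mu>2 x0 y0 W (Suc t)
    = vr_x G q B b \<alpha> \<beta> \<mu>1 \<mu>2 x0 y0 W t - \<alpha> *\<^sub>R vr_m G q B b \<alpha> \<beta> \<mu>1 \<mu>2 x0 y0 W t"
  by (simp add: vr_x_def vr_m_def Let_def split: prod.split)

lemma vr_y_Suc: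
  "vr_y G q B b \<alpha> \<beta> \<mu>1 \<mu>2 x0 y0 W (Suc t)
    = vr_y G q B b \<alpha> \<beta> \<mu>1 \<mu>2 x0 y0 W t + \<beta> *\<^sub>R vr_n G q B b \<alpha> \<beta> \<mu>1 \<mu>2 x0 y0 W t"
  by (simp add: vr_y_def vr_n_def Let_def split: prod.split)

theorem lemma6:
  fixes G :: "'a::euclidean_space \<Rightarrow> 'b::euclidean_space \<Rightarrow> 's \<Rightarrow> real"
    and P :: "'s measure" and M :: "'w measure"
    and W :: "nat \<Rightarrow> nat \<Rightarrow> 'w \<Rightarrow> ('s \<times> 'a) \<times> ('s \<times> 'b)"
    and q B b :: nat and \<alpha> \<beta> \<mu>1 \<mu>2 lbar :: real and x0 :: 'a and y0 :: 'b and t :: nat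
    and X :: "nat \<Rightarrow> 'w \<Rightarrow> 'a" and Y :: "nat \<Rightarrow> 'w \<Rightarrow> 'b"
    and m :: "nat \<Rightarrow> 'w \<Rightarrow> 'a" and n :: "nat \<Rightarrow> 'w \<Rightarrow> 'b"
    and g :: "'a \<Rightarrow> 'b \<Rightarrow> real" and gx :: "'a \<Rightarrow> 'b \<Rightarrow> 'a" and gy :: "'a \<Rightarrow> 'b \<Rightarrow> 'b"
    and D :: "(('s \<times> 'a) \<times> ('s \<times> 'b)) measure"
  defines "X \<equiv> \<lambda>k \<omega>. vr_x G q B b \<alpha> \<beta> \<mu>1 \<mu>2 x0 y0 (\<lambda>k' i. W k' i \<omega>) k"
    and "Y \<equiv> \<lambda>k \<omega>. vr_y G q B b \<alpha> \<beta> \<mu>1 \<mu>2 x0 y0 (\<lambda>k' i. W k' i \<omega>) k"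
    and "m \<equiv> \<lambda>k \<omega>. vr_m G q B b \<alpha> \<beta> \<mu>1 \<mu>2 x0 y0 (\<lambda>k' i. W k' i \<omega>) k"
    and "n \<equiv> \<lambda>k \<omega>. vr_n G q B b \<alpha> \<beta> \<mu>1 \<mu>2 x0 y0 (\<lambda>k' i. W k' i \<omega>) k"
    and "g \<equiv> obj G P"
    and "gx \<equiv> \<lambda>x y. grad (\<lambda>x'. g x' y) x"
    and "gy \<equiv> \<lambda>x y. grad (\<lambda>y'. g x y') y"
    and "D \<equiv> (P \<Otimes>\<^sub>M unif_sphere) \<Otimes>\<^sub>M (P \<Otimes>\<^sub>M unif_sphere)"
  assumes P: "prob_space P" and M: "prob_space M"
    and Gint: "\<forall>x y. integrable P (G x y)"
    and Gdiff: "\<forall>\<xi>\<in>space P. \<forall>x y. (\<lambda>x'. G x' y \<xi>) differentiable (at x) \<and> (\<lambda>y'. G x y' \<xi>) differentiable (at y)"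
    and lbar: "lbar > 0"
    and lipx: "\<forall>\<xi>\<in>space P. \<forall>x1 x2 y1 y2.
        norm (grad (\<lambda>x. G x y1 \<xi>) x1 - grad (\<lambda>x. G x y2 \<xi>) x2) \<le> lbar * (norm (x1 - x2) + norm (y1 - y2))"
    and lipy: "\<forall>\<xi>\<in>space P. \<forall>x1 x2 y1 y2.
        norm (grad (\<lambda>y. G x1 y \<xi>) y1 - grad (\<lambda>y. G x2 y \<xi>) y2) \<le> lbar * (norm (x1 - x2) + norm (y1 - y2))"
    and params: "\<alpha> > 0" "\<beta> > 0" "\<mu>1 > 0" "\<mu>2 > 0"
    and indep: "prob_space.indep_vars M (\<lambda>_. D) (\<lambda>(k, i). W k i) UNIV"
    and distW: "\<forall>k i. distr M D (W k i) = D"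
    and integrable_terms:
      "integrable M (\<lambda>\<omega>. g (X (Suc t) \<omega>) (Y (Suc t) \<omega>))"
      "integrable M (\<lambda>\<omega>. g (X t \<omega>) (Y t \<omega>))"
      "integrable M (\<lambda>\<omega>. (norm (gy (X (Suc t) \<omega>) (Y t \<omega>)))\<^sup>2)"
      "integrable M (\<lambda>\<omega>. (norm (gx (X t \<omega>) (Y t \<omega>)))\<^sup>2)"
      "integrable M (\<lambda>\<omega>. (norm (gy (X (Suc t) \<omega>) (Y t \<omega>) - n t \<omega>))\<^sup>2)"
      "integrable M (\<lambda>\<omega>. (norm (gx (X t \<omega>) (Y t \<omega>) - m t \<omega>))\<^sup>2)"
      "integrable M (\<lambda>\<omega>. (norm (n t \<omega>))\<^sup>2)"
      "integrable M (\<lambda>\<omega>. (norm (m t \<omega>))\<^sup>2)"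
  shows "(\<integral>\<omega>. g (X (Suc t) \<omega>) (Y (Suc t) \<omega>) \<partial>M) \<ge>
      (\<integral>\<omega>. g (X t \<omega>) (Y t \<omega>) \<partial>M)
      + \<beta> / 2 * (\<integral>\<omega>. (norm (gy (X (Suc t) \<omega>) (Y t \<omega>)))\<^sup>2 \<partial>M)
      - \<alpha> / 2 * (\<integral>\<omega>. (norm (gx (X t \<omega>) (Y t \<omega>)))\<^sup>2 \<partial>M)
      - \<beta> / 2 * (\<integral>\<omega>. (norm (gy (X (Suc t) \<omega>) (Y t \<omega>) - n t \<omega>))\<^sup>2 \<partial>M)
      + \<alpha> / 2 * (\<integral>\<omega>. (norm (gx (X t \<omega>) (Y t \<omega>) - m t \<omega>))\<^sup>2 \<partial>M)
      + \<beta> / 2 * (1 - lbar * \<beta>) * (\<integral>\<omega>. (norm (n t \<omega>))\<^sup>2 \<partial>M)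
      - \<alpha> / 2 * (1 + \<alpha> * lbar) * (\<integral>\<omega>. (norm (m t \<omega>))\<^sup>2 \<partial>M)"
proof -
  have lip_x: "norm (grad (\<lambda>x. G x y \<xi>) x1 - grad (\<lambda>x. G x y \<xi>) x2) \<le> lbar * norm (x1 - x2)"
    if "\<xi> \<in> space P" for \<xi> x1 x2 y
    using lipx that by (metis add.right_neutral diff_self norm_zero)
  have lip_y: "norm (grad (\<lambda>y. G x y \<xi>) y1 - grad (\<lambda>y. G x y \<xi>) y2) \<le> lbar * norm (y1 - y2)"
    if "\<xi> \<in> space P" for \<xi> x y1 y2
    using lipy that by (metis add_0 diff_self norm_zero)
  have g_x: "\<bar>g (x + h) y - g x y - gx x y \<bullet> h\<bar> \<le> lbar / 2 * (norm h)\<^sup>2" for x y h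
    unfolding g_def gx_def obj_def
    by (rule expectation_quadratic_bound[OF P]) (use Gint Gdiff lip_x in auto)
  have g_y: "\<bar>g x (y + h) - g x y - gy x y \<bullet> h\<bar> \<le> lbar / 2 * (norm h)\<^sup>2" for x y h
    unfolding g_def gy_def obj_def
    by (rule expectation_quadratic_bound[OF P]) (use Gint Gdiff lip_y in auto)
  have X_Suc: "X (Suc t) \<omega> = X t \<omega> - \<alpha> *\<^sub>R m t \<omega>"
    and Y_Suc: "Y (Suc t) \<omega> = Y t \<omega> + \<beta> *\<^sub>R n t \<omega>" for \<omega>
    by (simp_all add: X_def m_def Y_def n_def vr_x_Suc vr_y_Suc)
  show ?thesis
    using integral_mono[OF _ integrable_terms(1) gda_step_lower_bound[OF g_x g_y X_Suc Y_Suc]] integrable_terms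
    by (simp add: Bochner_Integration.integral_add Bochner_Integration.integral_diff
        Bochner_Integration.integrable_add Bochner_Integration.integrable_diff)
qed

end
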